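(* Let $D$ be an $n\times n$ spherical Euclidean distance matrix (EDM), generated by points $p^1,\dots,p^n\in\mathbb{R}^r$ whose affine span is $\mathbb{R}^r$ (so $r$ is the embedding dimension of $D$) and which lie on a hypersphere in $\mathbb{R}^r$ of radius $\rho$. Then \[ \rho^2 = \frac{e^T D e}{2n^2} + \frac{e^T D\, (\mathcal{T}(D))^{\dagger} D e}{4n^2}, \] where $e\in\mathbb{R}^n$ is the all-ones vector, $\mathcal{T}(D) = -\tfrac12 JDJ$ with $J = I_n - \tfrac1n ee^T$, and $A^\dagger$ denotes the Moore–Penrose inverse of $A$.
   Context: An $n\times n$ matrix $D=(d_{ij})$ is a Euclidean distance matrix (EDM) if there exist points $p^1,\dots,p^n$ in some Euclidean space with $d_{ij}=\|p^i-p^j\|^2$ for all $i,j$; the dimension of the affine span of these points is the embedding dimension of $D$. An EDM is spherical if the points generating it lie on a hypersphere. *)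

theory Defs
  imports "HOL-Analysis.Analysis"
begin

definition moore_penrose :: "real^'m^'n \<Rightarrow> real^'n^'m" where
  "moore_penrose A = (THE X. A ** X ** A = A \<and> X ** A ** X = X \<and>
      transpose (A ** X) = A ** X \<and> transpose (X ** A) = X ** A)"

definition edm_of :: "('n::finite \<Rightarrow> real^'r) \<Rightarrow> real^'n^'n" where
  "edm_of p = (\<chi> i j. (norm (p i - p j))^2)"

definition centering :: "real^'n::finite^'n" where
  "centering = mat 1 - (\<chi> i j. 1 / real CARD('n))"

definition gram_T :: "real^'n::finite^'n \<Rightarrow> real^'n^'n" where
  "gram_T D = (- 1/2) *\<^sub>R (centering ** D ** centering)"

end

theory Submission
  imports Defs
begin

text \<open>Translating the points to their centroid does not change D. For centred points
  \<open>u\<^sub>i\<close>, the rows of a matrix U, one gets \<open>\<T>(D) = U U\<^sup>T\<close>, and the spanning hypothesis makes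
  \<open>U\<^sup>T U\<close> invertible, so \<open>\<T>(D)\<^sup>\<dagger> = U (U\<^sup>T U)\<^sup>-\<^sup>2 U\<^sup>T\<close>. With d the centroid minus the centre,
  \<open>\<bar>u\<^sub>i + d\<bar> = \<rho>\<close> gives \<open>D e = 2n(\<rho>\<^sup>2 - \<bar>d\<bar>\<^sup>2) e - 2n U d\<close>, whence
  \<open>e\<^sup>T D e = 2n\<^sup>2(\<rho>\<^sup>2 - \<bar>d\<bar>\<^sup>2)\<close> and \<open>e\<^sup>T D \<T>(D)\<^sup>\<dagger> D e = 4n\<^sup>2\<bar>d\<bar>\<^sup>2\<close>.\<close>

lemma moore_penrose_unique:
  fixes A :: "real^'m::finite^'n::finite" and X Y :: "real^'n^'m"
  assumes x1: "A ** X ** A = A" and x2: "X ** A ** X = X" and x3: "transpose (A ** X) = A ** X"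
    and x4: "transpose (X ** A) = X ** A"
    and y1: "A ** Y ** A = A" and y2: "Y ** A ** Y = Y" and y3: "transpose (A ** Y) = A ** Y"
    and y4: "transpose (Y ** A) = Y ** A"
  shows "X = Y"
proof -
  have tA1: "transpose A = transpose A ** (A ** Y)"
    by (metis y1 y3 matrix_transpose_mul)
  have tA2: "transpose A = (X ** A) ** transpose A"
    by (metis x1 x4 matrix_transpose_mul matrix_mul_assoc)
  have "X = X ** (A ** X)" using x2 by (simp add: matrix_mul_assoc)
  also have "\<dots> = X ** (transpose X ** transpose A)" by (metis x3 matrix_transpose_mul)
  also have "\<dots> = X ** (transpose X ** (transpose A ** (A ** Y)))" using tA1 by simp
  also have "\<dots> = X ** transpose (A ** X) ** A ** Y" by (simp add: matrix_transpose_mul matrix_mul_assoc)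
  also have "\<dots> = X ** A ** Y" using x2 x3 by (simp add: matrix_mul_assoc)
  finally have X: "X = X ** A ** Y" .
  have "Y = (Y ** A) ** Y" using y2 by (simp add: matrix_mul_assoc)
  also have "\<dots> = (transpose A ** transpose Y) ** Y" by (metis y4 matrix_transpose_mul)
  also have "\<dots> = (((X ** A) ** transpose A) ** transpose Y) ** Y" using tA2 by simp
  also have "\<dots> = X ** A ** transpose (Y ** A) ** Y" by (simp add: matrix_transpose_mul matrix_mul_assoc)
  also have "\<dots> = X ** A ** (Y ** A ** Y)" using y4 by (simp add: matrix_mul_assoc)
  also have "\<dots> = X ** A ** Y" using y2 by simp
  finally show ?thesis using X by simp
qed

lemma moore_penrose_eqI:
  fixes A :: "real^'m::finite^'n::finite" and X :: "real^'n^'m"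
  assumes "A ** X ** A = A" and "X ** A ** X = X"
    and "transpose (A ** X) = A ** X" and "transpose (X ** A) = X ** A"
  shows "moore_penrose A = X"
  unfolding moore_penrose_def
proof (rule the_equality)
  fix Y
  assume "A ** Y ** A = A \<and> Y ** A ** Y = Y \<and> transpose (A ** Y) = A ** Y \<and> transpose (Y ** A) = Y ** A"
  then show "Y = X"
    using moore_penrose_unique[of A X Y] assms by auto
qed (use assms in auto)

lemma left_inverse_symmetric:
  fixes G B :: "real^'n::finite^'n"
  assumes "B ** G = mat 1" and "transpose G = G"
  shows "transpose B = B"
proof -
  have GB: "G ** B = mat 1" using assms(1) matrix_left_right_inverse by blast
  have "transpose B ** G = mat 1"
    by (metis GB assms(2) matrix_transpose_mul transpose_mat)
  then have "transpose B = (transpose B ** G) ** B"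
    by (metis GB matrix_mul_assoc matrix_mul_rid)
  then show ?thesis
    by (simp add: \<open>transpose B ** G = mat 1\<close>)
qed

lemma moore_penrose_mult_transpose:
  fixes U :: "real^'r::finite^'n::finite" and B :: "real^'r^'r"
  assumes B: "B ** (transpose U ** U) = mat 1"
  shows "moore_penrose (U ** transpose U) = U ** B ** B ** transpose U"
proof -
  have GB: "(transpose U ** U) ** B = mat 1" using B matrix_left_right_inverse by blast
  have Bt: "transpose B = B"
    using B by (rule left_inverse_symmetric) (simp add: matrix_transpose_mul)
  have cancel: "B ** (transpose U ** (U ** M)) = M" "transpose U ** (U ** (B ** M)) = M"
    for M :: "real^'k^'r"
    by (metis B GB matrix_mul_assoc matrix_mul_lid)+
  have sym: "transpose (U ** (B ** transpose U)) = U ** (B ** transpose U)"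
    by (simp add: matrix_transpose_mul Bt matrix_mul_assoc[symmetric])
  show ?thesis
    by (rule moore_penrose_eqI) (simp_all add: matrix_mul_assoc[symmetric] cancel sym)
qed

lemma inner_moore_penrose_mult_transpose:
  fixes U :: "real^'r::finite^'n::finite" and B :: "real^'r^'r"
  assumes B: "B ** (transpose U ** U) = mat 1" and ones_U: "1 v* U = 0"
  shows "(a *\<^sub>R 1 + U *v d) \<bullet> (moore_penrose (U ** transpose U) *v (a *\<^sub>R 1 + U *v d)) = d \<bullet> d"
proof -
  have GB: "(transpose U ** U) ** B = mat 1" using B matrix_left_right_inverse by blast
  have ones_Ux: "1 \<bullet> (U *v x) = 0" for x
    using dot_lmul_matrix[of 1 U x] ones_U by simp
  have Uy: "transpose U *v (a *\<^sub>R 1 + U *v d) = (transpose U ** U) *v d"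
    using ones_U transpose_matrix_vector[of U 1]
    by (simp add: matrix_vector_right_distrib matrix_vector_mult_scaleR
        matrix_vector_mul_assoc del: transpose_matrix_vector)
  have "moore_penrose (U ** transpose U) *v (a *\<^sub>R 1 + U *v d)
      = U *v (B *v (B *v (transpose U *v (a *\<^sub>R 1 + U *v d))))"
    by (simp only: moore_penrose_mult_transpose[OF B] matrix_vector_mul_assoc matrix_mul_assoc)
  also have "\<dots> = U *v (B *v d)"
    by (simp only: Uy matrix_vector_mul_assoc B matrix_vector_mul_lid)
  finally have MPy: "moore_penrose (U ** transpose U) *v (a *\<^sub>R 1 + U *v d) = U *v (B *v d)" .
  have "(U *v d) \<bullet> (U *v (B *v d)) = d \<bullet> ((transpose U ** U) *v (B *v d))"
    using dot_lmul_matrix[of d "transpose U" "U *v (B *v d)"]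
    by (simp only: vector_transpose_matrix matrix_vector_mul_assoc matrix_mul_assoc)
  also have "\<dots> = d \<bullet> d"
    by (simp add: matrix_vector_mul_assoc GB)
  finally show ?thesis
    by (simp add: MPy inner_add_left ones_Ux)
qed

lemma centering_mult_left:
  "((centering :: real^'n::finite^'n) ** A) $ i $ j = A $ i $ j - (\<Sum>k\<in>UNIV. A $ k $ j) / real CARD('n)"
proof -
  have "((centering :: real^'n^'n) ** A) $ i $ j
      = (\<Sum>k\<in>UNIV. (if i = k then A $ k $ j else 0) - A $ k $ j / real CARD('n))"
    by (auto simp: centering_def matrix_matrix_mult_def mat_def algebra_simps intro!: sum.cong)
  then show ?thesis
    by (simp add: sum_subtractf sum_divide_distrib)
qed

lemma centering_mult_right:
  "(A ** (centering :: real^'n::finite^'n)) $ i $ j = A $ i $ j - (\<Sum>k\<in>UNIV. A $ i $ k) / real CARD('n)"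
  by (simp add: centering_def matrix_matrix_mult_def mat_def if_distrib[of "\<lambda>x. _ * x"]
      sum_subtractf sum_divide_distrib algebra_simps cong: if_cong)

lemma edm_of_translate: "edm_of (\<lambda>i. p i - a) = edm_of p"
  by (simp add: edm_of_def)

lemma transpose_edm_of: "transpose (edm_of p) = edm_of p"
  by (simp add: vec_eq_iff transpose_def edm_of_def norm_minus_commute)

lemma edm_of_inner: "edm_of u $ k $ l = u k \<bullet> u k + u l \<bullet> u l - 2 * (u k \<bullet> u l)"
  by (simp add: edm_of_def power2_norm_eq_inner inner_diff_left inner_diff_right inner_commute)

lemma edm_of_row_sum:
  fixes u :: "'n::finite \<Rightarrow> real^'r"
  assumes "(\<Sum>i\<in>UNIV. u i) = 0"
  shows "(\<Sum>l\<in>UNIV. edm_of u $ k $ l) = real CARD('n) * (u k \<bullet> u k) + (\<Sum>l\<in>UNIV. u l \<bullet> u l)"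
proof -
  have "(\<Sum>l\<in>UNIV. u k \<bullet> u l) = 0"
    by (simp add: inner_sum_right[symmetric] assms)
  then show ?thesis
    by (simp add: edm_of_inner sum.distrib sum_subtractf sum_distrib_left[symmetric])
qed

lemma edm_of_column_sum:
  fixes u :: "'n::finite \<Rightarrow> real^'r"
  assumes "(\<Sum>i\<in>UNIV. u i) = 0"
  shows "(\<Sum>k\<in>UNIV. edm_of u $ k $ l) = real CARD('n) * (u l \<bullet> u l) + (\<Sum>k\<in>UNIV. u k \<bullet> u k)"
proof -
  have "edm_of u $ k $ l = edm_of u $ l $ k" for k
    by (simp add: edm_of_def norm_minus_commute)
  then show ?thesis
    using edm_of_row_sum[OF assms, of l] by simp
qed

lemma gram_T_edm_of_centered:
  fixes u :: "'n::finite \<Rightarrow> real^'r::finite"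
  assumes u: "(\<Sum>i\<in>UNIV. u i) = 0"
  shows "gram_T (edm_of u) = (\<chi> i. u i) ** transpose (\<chi> i. u i)"
proof -
  define n where "n = real CARD('n)"
  define S where "S = (\<Sum>k\<in>UNIV. u k \<bullet> u k)"
  have n: "n > 0" by (simp add: n_def)
  have row: "(\<Sum>l\<in>UNIV. edm_of u $ k $ l) = n * (u k \<bullet> u k) + S" for k
    using edm_of_row_sum[OF u] by (simp add: n_def S_def)
  have col: "(\<Sum>k\<in>UNIV. edm_of u $ k $ l) = n * (u l \<bullet> u l) + S" for l
    using edm_of_column_sum[OF u] by (simp add: n_def S_def)
  have JD: "(centering ** edm_of u) $ i $ l = edm_of u $ i $ l - u l \<bullet> u l - S / n" for i l
    using n by (simp add: centering_mult_left col n_def[symmetric] add_divide_distrib)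
  have "(\<Sum>l\<in>UNIV. (centering ** edm_of u) $ i $ l) = (\<Sum>l\<in>UNIV. edm_of u $ i $ l) - S - S" for i
    using n by (simp only: JD sum_subtractf S_def[symmetric]) (simp add: n_def)
  then have JD_row: "(\<Sum>l\<in>UNIV. (centering ** edm_of u) $ i $ l) = n * (u i \<bullet> u i) - S" for i
    by (simp add: row)
  have "(centering ** edm_of u ** centering) $ i $ j = - 2 * (u i \<bullet> u j)" for i j
    unfolding centering_mult_right n_def[symmetric] JD_row
    using n by (simp add: JD edm_of_inner field_simps)
  then show ?thesis
    by (simp add: gram_T_def vec_eq_iff matrix_matrix_mult_def transpose_def inner_vec_def mult.commute)
qed

lemma edm_of_mult_ones_spherical:
  fixes u :: "'n::finite \<Rightarrow> real^'r::finite"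
  assumes u: "(\<Sum>i\<in>UNIV. u i) = 0" and sphere: "\<And>i. norm (u i + d) = \<rho>"
  defines "n \<equiv> real CARD('n)"
  shows "edm_of u *v 1 = (2 * n * (\<rho>^2 - d \<bullet> d)) *\<^sub>R 1 + (\<chi> i. u i) *v ((- 2 * n) *\<^sub>R d)"
proof -
  have sq: "u i \<bullet> u i = \<rho>^2 - 2 * (u i \<bullet> d) - d \<bullet> d" for i
  proof -
    have "\<rho>^2 = (u i + d) \<bullet> (u i + d)"
      by (metis sphere power2_norm_eq_inner)
    then show ?thesis
      by (simp add: inner_add_left inner_add_right inner_commute)
  qed
  have "(\<Sum>k\<in>UNIV. u k \<bullet> d) = 0"
    by (simp add: inner_sum_left[symmetric] u)
  then have S: "(\<Sum>k\<in>UNIV. u k \<bullet> u k) = n * (\<rho>^2 - d \<bullet> d)"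
    by (simp add: sq sum_subtractf sum.distrib sum_distrib_left[symmetric] n_def algebra_simps)
  show ?thesis
  proof (subst vec_eq_iff, intro allI)
    fix i
    have "(edm_of u *v 1) $ i = n * (u i \<bullet> u i) + n * (\<rho>^2 - d \<bullet> d)"
      using edm_of_row_sum[OF u, of i] by (simp add: matrix_vector_mult_def S n_def)
    then show "(edm_of u *v 1) $ i = ((2 * n * (\<rho>^2 - d \<bullet> d)) *\<^sub>R 1 + (\<chi> i. u i) *v ((- 2 * n) *\<^sub>R d)) $ i"
      by (simp add: matrix_vector_mul_component sq algebra_simps)
  qed
qed

lemma matrix_vector_mul_eq_0_affine_hull_UNIV:
  fixes p :: "'n::finite \<Rightarrow> real^'r::finite"
  assumes span: "affine hull (range p) = UNIV" and x: "(\<chi> i. p i - a) *v x = 0"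
  shows "x = 0"
proof -
  have "a + x \<in> (+) a ` span ((\<lambda>y. y - a) ` range p)"
    using affine_hull_span_gen[of a "range p"] span by simp
  then have "x \<in> span ((\<lambda>y. y - a) ` range p)"
    by auto
  moreover have "orthogonal x y" if "y \<in> (\<lambda>y. y - a) ` range p" for y
    using that x by (auto simp: orthogonal_def vec_eq_iff matrix_vector_mul_component inner_commute)
  ultimately have "orthogonal x x"
    by (rule orthogonal_to_span)
  then show ?thesis
    by (simp add: orthogonal_def)
qed

lemma gram_left_invertible:
  fixes U :: "real^'r::finite^'n::finite"
  assumes "\<And>x. U *v x = 0 \<Longrightarrow> x = 0"
  obtains B where "B ** (transpose U ** U) = mat 1"
proof -
  have "x = 0" if "(transpose U ** U) *v x = 0" for x
  proof -
    have "(U *v x) \<bullet> (U *v x) = x \<bullet> ((transpose U ** U) *v x)"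
      using dot_lmul_matrix[of x "transpose U" "U *v x"]
      by (simp only: vector_transpose_matrix matrix_vector_mul_assoc)
    then show ?thesis using that assms by simp
  qed
  then show ?thesis using that matrix_left_invertible_ker by blast
qed

lemma ones_vector_mult_rows: "1 v* (\<chi> i. u i) = (\<Sum>i\<in>UNIV. u i)"
  by (simp add: vec_eq_iff vector_matrix_mult_def sum_component)

lemma sum_diff_centroid:
  fixes p :: "'n::finite \<Rightarrow> 'a::real_vector"
  shows "(\<Sum>i\<in>UNIV. p i - (1 / real CARD('n)) *\<^sub>R (\<Sum>j\<in>UNIV. p j)) = 0"
proof -
  have "(\<Sum>i\<in>(UNIV :: 'n set). (1 / real CARD('n)) *\<^sub>R (\<Sum>j\<in>UNIV. p j)) = (\<Sum>j\<in>UNIV. p j)"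
    by (simp only: sum_constant_scaleR) simp
  then show ?thesis
    by (simp add: sum_subtractf)
qed

lemma spherical_edm_radius_centered:
  fixes u :: "'n::finite \<Rightarrow> real^'r::finite"
  assumes u: "(\<Sum>i\<in>UNIV. u i) = 0" and full_rank: "\<And>x. (\<chi> i. u i) *v x = 0 \<Longrightarrow> x = 0"
    and sphere: "\<And>i. norm (u i + d) = \<rho>"
  defines "D \<equiv> edm_of u" and "n \<equiv> real CARD('n)"
  shows "\<rho>^2 = (1 \<bullet> (D *v 1)) / (2 * n^2)
              + ((1 v* D) \<bullet> (moore_penrose (gram_T D) *v (D *v 1))) / (4 * n^2)"
proof -
  define U where "U = (\<chi> i. u i)"
  obtain B where B: "B ** (transpose U ** U) = mat 1"
    using gram_left_invertible full_rank unfolding U_def by blast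
  have ones_U: "1 v* U = 0"
    by (simp add: U_def ones_vector_mult_rows u)
  have D1: "D *v 1 = (2 * n * (\<rho>^2 - d \<bullet> d)) *\<^sub>R 1 + U *v ((- 2 * n) *\<^sub>R d)"
    unfolding D_def U_def n_def using u sphere by (rule edm_of_mult_ones_spherical)
  have "1 \<bullet> (U *v x) = 0" for x
    by (simp add: dot_lmul_matrix[symmetric] ones_U)
  moreover have "(1 :: real^'n) \<bullet> 1 = n"
    by (simp add: n_def inner_vec_def)
  ultimately have "1 \<bullet> (D *v 1) = 2 * n^2 * (\<rho>^2 - d \<bullet> d)"
    by (simp add: D1 inner_add_right power2_eq_square)
  moreover have "(1 v* D) \<bullet> (moore_penrose (gram_T D) *v (D *v 1)) = 4 * n^2 * (d \<bullet> d)"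
  proof -
    have "1 v* D = D *v 1"
      by (metis D_def transpose_edm_of vector_transpose_matrix)
    moreover have "gram_T D = U ** transpose U"
      by (simp add: D_def gram_T_edm_of_centered[OF u] U_def)
    ultimately show ?thesis
      using inner_moore_penrose_mult_transpose[OF B ones_U]
      by (simp add: D1 power2_eq_square)
  qed
  ultimately show ?thesis
    by (simp add: n_def field_simps)
qed

theorem lemma4:
  fixes p :: "'n::finite \<Rightarrow> real^'r::finite" and c :: "real^'r" and \<rho> :: real
  assumes span: "affine hull (range p) = UNIV"
    and sphere: "\<forall>i. dist (p i) c = \<rho>"
  defines "D \<equiv> edm_of p" and "e \<equiv> (1 :: real^'n)" and "n \<equiv> real CARD('n)"
  shows "\<rho>^2 = (e \<bullet> (D *v e)) / (2 * n^2)
              + ((e v* D) \<bullet> (moore_penrose (gram_T D) *v (D *v e))) / (4 * n^2)"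
proof -
  define m where "m = (1 / n) *\<^sub>R (\<Sum>i\<in>UNIV. p i)"
  define u where "u = (\<lambda>i. p i - m)"
  have "(\<Sum>i\<in>UNIV. u i) = 0"
    unfolding u_def m_def n_def by (rule sum_diff_centroid)
  moreover have "(\<chi> i. u i) *v x = 0 \<Longrightarrow> x = 0" for x
    unfolding u_def by (rule matrix_vector_mul_eq_0_affine_hull_UNIV[OF span])
  moreover have "norm (u i + (m - c)) = \<rho>" for i
    using sphere by (simp add: u_def dist_norm)
  moreover have "D = edm_of u"
    by (simp add: D_def u_def edm_of_translate)
  ultimately show ?thesis
    unfolding e_def n_def using spherical_edm_radius_centered by blast
qed

end
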